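(* Let $X$ be as in the standing setting with skeleton $X_1,\dots,X_k$. If $x\in X$ does not lie in $\operatorname{span}X_i$ for any $i$, then there exist indices $i\ne j$ and points $x_i\in X_i$, $x_j\in X_j$ such that $x\in\operatorname{pos}\{x_i,x_j\}$.
   Context: Standing setting: $X\subset\mathbb R^n\setminus\{0\}$ is a finite set such that $0$ lies in the interior of $\operatorname{conv}X$, no element of $X$ is a positive multiple of another, and every $n+1$ points of $X$ are in good position. A finite set $A$ is in conical position if $0\notin\operatorname{conv}A$ and no point of $A$ lies in the positive hull (set of nonnegative linear combinations, denoted $\operatorname{pos}$) of the other points; it is in good position otherwise. A skeleton of $X$ is a collection of pairwise disjoint subsets $X_1,\dots,X_k\subseteq X$ such that each $X_i$ is the vertex set of a simplex whose relative interior contains $0$ and $\mathbb R^n=\operatorname{span}X_1\oplus\cdots\oplus\operatorname{span}X_k$. *)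

theory Defs
  imports "HOL-Analysis.Analysis"
begin

definition pos :: "'a::real_vector set \<Rightarrow> 'a set" where
  "pos A = {v. \<exists>c. (\<forall>a\<in>A. c a \<ge> 0) \<and> v = (\<Sum>a\<in>A. c a *\<^sub>R a)}"

definition conical_position :: "'a::real_vector set \<Rightarrow> bool" where
  "conical_position A \<longleftrightarrow> 0 \<notin> convex hull A \<and> (\<forall>a\<in>A. a \<notin> pos (A - {a}))"

definition good_position :: "'a::real_vector set \<Rightarrow> bool" where
  "good_position A \<longleftrightarrow> \<not> conical_position A"

definition standing_setting :: "'a::euclidean_space set \<Rightarrow> bool" where
  "standing_setting X \<longleftrightarrow>
     finite X \<and> 0 \<notin> X \<and> 0 \<in> interior (convex hull X) \<and>
     (\<forall>x\<in>X. \<forall>y\<in>X. x \<noteq> y \<longrightarrow> \<not> (\<exists>c::real. c > 0 \<and> y = c *\<^sub>R x)) \<and>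
     (\<forall>A. A \<subseteq> X \<and> card A = DIM('a) + 1 \<longrightarrow> good_position A)"

definition direct_sum_UNIV :: "nat \<Rightarrow> (nat \<Rightarrow> 'a::real_vector set) \<Rightarrow> bool" where
  "direct_sum_UNIV k V \<longleftrightarrow>
     (\<forall>v. \<exists>!f. (\<forall>i<k. f i \<in> V i) \<and> (\<forall>i\<ge>k. f i = 0) \<and> v = (\<Sum>i<k. f i))"

definition skeleton :: "'a::euclidean_space set \<Rightarrow> nat \<Rightarrow> (nat \<Rightarrow> 'a set) \<Rightarrow> bool" where
  "skeleton X k Xs \<longleftrightarrow>
     (\<forall>i<k. Xs i \<subseteq> X) \<and>
     (\<forall>i<k. \<forall>j<k. i \<noteq> j \<longrightarrow> Xs i \<inter> Xs j = {}) \<and>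
     (\<forall>i<k. Xs i \<noteq> {} \<and> \<not> affine_dependent (Xs i) \<and> 0 \<in> rel_interior (convex hull (Xs i))) \<and>
     direct_sum_UNIV k (\<lambda>i. span (Xs i))"

end

(* Every simplex X_i carries positive barycentric weights of 0, so each vector of span X_i is
   a nonnegative, and also a nonpositive, combination of X_i with some coefficient zero;
   dropping that point from every simplex leaves a basis C of the space. If the coordinates
   of x in such a basis had two positive entries and a negative one, then C together with x
   would be n + 1 points of X in conical position, which the standing setting forbids.
   Writing x = f_1 + ... + f_k with f_i in span X_i and using the nonnegative representation
   in two blocks and the nonpositive one in a third, this forces every nonzero f_i to be a
   positive multiple of a single point of X_i, and at most two f_i to be nonzero; as x lies
   in no span X_i, exactly two are. *)

theory Submission
  imports Defs
begin

lemma independent_sum_coeffs_eq: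
  fixes C :: "'a::real_vector set"
  assumes "finite C" "independent C"
    and "(\<Sum>c\<in>C. a c *\<^sub>R c) = (\<Sum>c\<in>C. b c *\<^sub>R c)" "c \<in> C"
  shows "a c = b c"
proof (rule ccontr)
  assume "a c \<noteq> b c"
  moreover have "(\<Sum>c\<in>C. (a c - b c) *\<^sub>R c) = 0"
    using assms(3) by (simp add: scaleR_diff_left sum_subtractf)
  ultimately have "dependent C"
    using assms(4) dependent_finite[OF assms(1)] by (metis right_minus_eq)
  with assms(2) show False by simp
qed

lemma nonneg_comb_nonzero_imp_pos_coeff:
  fixes S :: "'a::real_vector set" and a :: "'a \<Rightarrow> real"
  assumes nonneg: "\<forall>y\<in>S. 0 \<le> a y" and nz: "(\<Sum>y\<in>S. a y *\<^sub>R y) \<noteq> 0"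
  shows "\<exists>y\<in>S. 0 < a y"
proof -
  obtain y where "y \<in> S" "a y *\<^sub>R y \<noteq> 0"
    using sum.not_neutral_contains_not_neutral[OF nz] .
  with nonneg show ?thesis by (force simp: less_eq_real_def)
qed

lemma nonpos_comb_nonzero_imp_neg_coeff:
  fixes S :: "'a::real_vector set" and a :: "'a \<Rightarrow> real"
  assumes "\<forall>y\<in>S. a y \<le> 0" and "(\<Sum>y\<in>S. a y *\<^sub>R y) \<noteq> 0"
  shows "\<exists>y\<in>S. a y < 0"
  using nonneg_comb_nonzero_imp_pos_coeff[of S "\<lambda>y. - a y"] assms by (simp add: sum_negf)

lemma sum_scaleR_single_support:
  fixes S :: "'a::real_vector set" and a :: "'a \<Rightarrow> real"
  assumes "finite S" "y0 \<in> S" "\<forall>y\<in>S - {y0}. a y = 0"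
  shows "(\<Sum>y\<in>S. a y *\<^sub>R y) = a y0 *\<^sub>R y0"
proof -
  have "\<forall>y\<in>S - {y0}. a y *\<^sub>R y = 0" using assms(3) by auto
  then have "(\<Sum>y\<in>S. a y *\<^sub>R y) = (\<Sum>y\<in>{y0}. a y *\<^sub>R y)"
    using assms(1,2) by (intro sum.mono_neutral_right) auto
  then show ?thesis by simp
qed

lemma two_nonzero_summands:
  fixes f :: "nat \<Rightarrow> 'a::comm_monoid_add"
  assumes "(\<Sum>i<k. f i) \<noteq> 0" and "\<forall>i<k. (\<Sum>i<k. f i) \<noteq> f i"
  shows "\<exists>i<k. \<exists>j<k. i \<noteq> j \<and> f i \<noteq> 0 \<and> f j \<noteq> 0"
proof -
  obtain i where i: "i \<in> {..<k}" "f i \<noteq> 0"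
    using sum.not_neutral_contains_not_neutral[OF assms(1)] by blast
  have "\<not> (\<forall>j\<in>{..<k} - {i}. f j = 0)"
    using sum.mono_neutral_right[of "{..<k}" "{i}" f] i(1) assms(2) by auto
  then obtain j where "j < k" "j \<noteq> i" "f j \<noteq> 0" by blast
  with i show ?thesis by blast
qed

lemma zero_notin_convex_hull_insert_pos_coord:
  fixes C :: "'a::real_vector set"
  assumes fin: "finite C" and ind: "independent C" and xC: "x \<notin> C"
    and x: "x = (\<Sum>c\<in>C. u c *\<^sub>R c)" and c1: "c1 \<in> C" "u c1 > 0"
  shows "0 \<notin> convex hull insert x C"
proof
  assume "0 \<in> convex hull insert x C"
  then obtain w where w: "\<forall>a\<in>insert x C. 0 \<le> w a" "sum w (insert x C) = 1"
    "(\<Sum>a\<in>insert x C. w a *\<^sub>R a) = 0"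
    using convex_hull_finite[of "insert x C"] fin by auto
  have "(\<Sum>a\<in>insert x C. w a *\<^sub>R a) = (\<Sum>c\<in>C. (w x * u c + w c) *\<^sub>R c)"
    using fin xC by (simp add: x scaleR_sum_right sum.distrib scaleR_add_left)
  then have e: "\<And>c. c \<in> C \<Longrightarrow> w x * u c + w c = 0"
    using w(3) independent_sum_coeffs_eq[OF fin ind, of "\<lambda>c. w x * u c + w c" "\<lambda>_. 0"]
    by simp
  have "w x * u c1 \<le> 0" using e[OF c1(1)] w(1) c1(1) by force
  then have "w x \<le> 0" using c1(2) by (simp add: mult_le_0_iff)
  then have wx: "w x = 0" using w(1) by force
  then have "sum w (insert x C) = 0" using e fin xC by simp
  with w(2) show False by simp
qed

lemma notin_pos_basis_neg_coord:
  fixes C :: "'a::real_vector set"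
  assumes fin: "finite C" and ind: "independent C"
    and x: "x = (\<Sum>c\<in>C. u c *\<^sub>R c)" and c: "c \<in> C" "u c < 0"
  shows "x \<notin> pos C"
proof
  assume "x \<in> pos C"
  then obtain w where w: "\<forall>c\<in>C. 0 \<le> w c" "x = (\<Sum>c\<in>C. w c *\<^sub>R c)"
    unfolding pos_def by auto
  have "u c = w c" using independent_sum_coeffs_eq[OF fin ind _ c(1), of u w] x w(2) by simp
  with w(1) c show False by force
qed

lemma basis_vector_notin_pos_insert:
  fixes C :: "'a::real_vector set"
  assumes fin: "finite C" and ind: "independent C" and xC: "x \<notin> C"
    and x: "x = (\<Sum>c\<in>C. u c *\<^sub>R c)" and aC: "a \<in> C"
    and c: "c \<in> C" "c \<noteq> a" "u c > 0"
  shows "a \<notin> pos (insert x (C - {a}))"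
proof
  assume "a \<in> pos (insert x (C - {a}))"
  then obtain w where w: "\<forall>b\<in>insert x (C - {a}). 0 \<le> w b"
      "a = (\<Sum>b\<in>insert x (C - {a}). w b *\<^sub>R b)"
    unfolding pos_def by auto
  define e where "e c = w x * u c + (if c = a then 0 else w c)" for c
  have "a = (\<Sum>c\<in>C. (if c = a then 1 else 0) *\<^sub>R c)"
    using fin aC by (simp add: if_distrib[of "\<lambda>r. r *\<^sub>R _"] cong: if_cong)
  moreover have "a = (\<Sum>c\<in>C. e c *\<^sub>R c)"
  proof -
    have "(\<Sum>b\<in>insert x (C - {a}). w b *\<^sub>R b) = w x *\<^sub>R x + (\<Sum>c\<in>C - {a}. w c *\<^sub>R c)"
      using fin xC by simp
    also have "(\<Sum>c\<in>C - {a}. w c *\<^sub>R c) = (\<Sum>c\<in>C. (if c = a then 0 else w c) *\<^sub>R c)"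
      by (simp add: sum.remove[OF fin aC])
    also have "w x *\<^sub>R x + (\<Sum>c\<in>C. (if c = a then 0 else w c) *\<^sub>R c) = (\<Sum>c\<in>C. e c *\<^sub>R c)"
      by (simp add: e_def x scaleR_sum_right sum.distrib scaleR_add_left)
    finally show ?thesis using w(2) by simp
  qed
  ultimately have "(\<Sum>c\<in>C. (if c = a then 1 else 0) *\<^sub>R c) = (\<Sum>c\<in>C. e c *\<^sub>R c)"
    by (rule trans[OF sym])
  from independent_sum_coeffs_eq[OF fin ind this]
  have coeffs: "\<And>c. c \<in> C \<Longrightarrow> (if c = a then 1 else 0) = e c" .
  have "w x * u a = 1" using coeffs[OF aC] by (simp add: e_def)
  then have "w x > 0" using w(1) by (cases "w x = 0") auto
  then have "w x * u c > 0" using c(3) by simp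
  moreover have "w x * u c + w c = 0" using coeffs[OF c(1)] c(2) by (simp add: e_def)
  moreover have "w c \<ge> 0" using w(1) c by simp
  ultimately show False by linarith
qed

lemma conical_position_insert_mixed_signs:
  fixes C :: "'a::real_vector set"
  assumes fin: "finite C" and ind: "independent C" and xC: "x \<notin> C"
    and x: "x = (\<Sum>c\<in>C. u c *\<^sub>R c)"
    and c1: "c1 \<in> C" "u c1 > 0" and c2: "c2 \<in> C" "u c2 > 0" "c1 \<noteq> c2"
    and c3: "c3 \<in> C" "u c3 < 0"
  shows "conical_position (insert x C)"
  unfolding conical_position_def
proof (intro conjI ballI)
  show "0 \<notin> convex hull insert x C"
    by (rule zero_notin_convex_hull_insert_pos_coord[OF fin ind xC x c1])
next
  fix a assume "a \<in> insert x C"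
  then consider "a = x" | "a \<in> C" "a \<noteq> x" by blast
  then show "a \<notin> pos (insert x C - {a})"
  proof cases
    case 1
    then have "insert x C - {a} = C" using xC by auto
    with 1 show ?thesis using notin_pos_basis_neg_coord[OF fin ind x c3] by simp
  next
    case 2
    then have "insert x C - {a} = insert x (C - {a})" by auto
    moreover obtain c where "c \<in> C" "c \<noteq> a" "u c > 0" using c1 c2 by metis
    ultimately show ?thesis
      using basis_vector_notin_pos_insert[OF fin ind xC x \<open>a \<in> C\<close>] by simp
  qed
qed

lemma independent_remove_of_positive_null_comb:
  fixes S :: "'a::real_vector set"
  assumes fin: "finite S" and ad: "\<not> affine_dependent S" and p: "p \<in> S"
    and l: "\<forall>y\<in>S. 0 < l y" "sum l S = 1" "(\<Sum>y\<in>S. l y *\<^sub>R y) = 0"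
  shows "independent (S - {p})"
proof
  assume "dependent (S - {p})"
  then obtain m where m: "\<exists>v\<in>S - {p}. m v \<noteq> 0" "(\<Sum>v\<in>S - {p}. m v *\<^sub>R v) = 0"
    using dependent_finite[of "S - {p}"] fin by auto
  define m' where "m' v = (if v = p then 0 else m v)" for v
  have "(\<Sum>v\<in>S - {p}. m' v *\<^sub>R v) = (\<Sum>v\<in>S - {p}. m v *\<^sub>R v)"
    by (rule sum.cong) (auto simp: m'_def)
  then have m'0: "(\<Sum>v\<in>S. m' v *\<^sub>R v) = 0"
    using m(2) by (simp add: sum.remove[OF fin p] m'_def)
  text \<open>Subtracting a multiple of the null combination l turns m' into an affine dependence.\<close>
  define t where "t = sum m' S"
  define U where "U v = m' v - t * l v" for v
  have "sum U S = 0" unfolding U_def t_def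
    by (simp add: sum_subtractf sum_distrib_left[symmetric] l(2))
  moreover have "(\<Sum>v\<in>S. U v *\<^sub>R v) = 0"
    unfolding U_def by (simp add: scaleR_diff_left sum_subtractf m'0
        scaleR_scaleR[symmetric] scaleR_sum_right[symmetric] l(3) del: scaleR_scaleR)
  ultimately have U0: "\<forall>v\<in>S. U v = 0"
    using ad affine_dependent_explicit_finite[OF fin] by auto
  then have "t * l p = 0" using U0[rule_format, OF p] by (simp add: U_def m'_def)
  then have "t = 0" using l(1) p by auto
  then have m'_zero: "\<forall>v\<in>S. m' v = 0" using U0 by (simp add: U_def)
  from m(1) obtain v where "v \<in> S" "v \<noteq> p" "m v \<noteq> 0" by blast
  with m'_zero show False by (metis m'_def)
qed

lemma span_remove_of_positive_null_comb:
  fixes S :: "'a::real_vector set"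
  assumes fin: "finite S" and p: "p \<in> S"
    and l: "\<forall>y\<in>S. 0 < l y" "(\<Sum>y\<in>S. l y *\<^sub>R y) = 0"
  shows "span (S - {p}) = span S"
proof -
  have lp: "l p > 0" using l(1) p by blast
  have "l p *\<^sub>R p = - (\<Sum>y\<in>S - {p}. l y *\<^sub>R y)"
    using sum.remove[OF fin p, of "\<lambda>y. l y *\<^sub>R y"] l(2) by (simp add: eq_neg_iff_add_eq_0)
  also have "\<dots> \<in> span (S - {p})"
    by (intro span_neg span_sum span_scale span_base)
  finally have "(1 / l p) *\<^sub>R (l p *\<^sub>R p) \<in> span (S - {p})"
    by (rule span_scale)
  then have "p \<in> span (S - {p})" using lp by simp
  then have "S \<subseteq> span (S - {p})" by (auto intro: span_base)
  then show ?thesis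
    by (metis Diff_subset order.antisym span_minimal span_mono subspace_span)
qed

text \<open>Subtract from a representation of v the largest multiple of l that keeps all
  coefficients nonnegative.\<close>
lemma span_eq_nonneg_comb_vanishing_at_point:
  fixes S :: "'a::real_vector set"
  assumes fin: "finite S" and ne: "S \<noteq> {}"
    and l: "\<forall>y\<in>S. 0 < l y" "(\<Sum>y\<in>S. l y *\<^sub>R y) = 0"
    and v: "v \<in> span S"
  shows "\<exists>a. (\<exists>p\<in>S. a p = 0) \<and> (\<forall>y\<in>S. 0 \<le> a y) \<and> v = (\<Sum>y\<in>S. a y *\<^sub>R y)"
proof -
  obtain t where t: "v = (\<Sum>y\<in>S. t y *\<^sub>R y)" using v span_finite[OF fin] by auto
  define m where "m = Min ((\<lambda>y. t y / l y) ` S)"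
  have "m \<in> (\<lambda>y. t y / l y) ` S" unfolding m_def using fin ne by (intro Min_in) auto
  then obtain p where p: "p \<in> S" "m = t p / l p" by auto
  define a where "a y = t y - m * l y" for y
  have "l p > 0" using p l(1) by blast
  then have "a p = 0" using p by (simp add: a_def)
  moreover have "\<forall>y\<in>S. 0 \<le> a y"
  proof
    fix y assume y: "y \<in> S"
    have "m \<le> t y / l y" unfolding m_def using fin y by auto
    then show "0 \<le> a y" using l(1) y by (simp add: a_def pos_le_divide_eq)
  qed
  moreover have "v = (\<Sum>y\<in>S. a y *\<^sub>R y)"
    unfolding a_def t by (simp add: scaleR_diff_left sum_subtractf
        scaleR_scaleR[symmetric] scaleR_sum_right[symmetric] l(2) del: scaleR_scaleR)
  ultimately show ?thesis using p by blast
qed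

lemma direct_sum_UNIV_zero:
  assumes ds: "direct_sum_UNIV k V" and V0: "\<forall>i<k. 0 \<in> V i"
    and g: "\<forall>i<k. g i \<in> V i" "(\<Sum>i<k. g i) = 0"
  shows "\<forall>i<k. g i = 0"
proof -
  define P where "P f \<longleftrightarrow> (\<forall>i<k. f i \<in> V i) \<and> (\<forall>i\<ge>k. f i = 0) \<and> (0::'a) = (\<Sum>i<k. f i)"
    for f
  have uniq: "\<exists>!f. P f" using ds unfolding direct_sum_UNIV_def P_def by (rule spec)
  have "P (\<lambda>i. if i < k then g i else 0)" using g unfolding P_def by simp
  moreover have "P (\<lambda>_. 0)" using V0 unfolding P_def by simp
  ultimately have "(\<lambda>i. if i < k then g i else 0) = (\<lambda>_. 0)" using uniq by blast
  then show ?thesis by (metis (full_types))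
qed

lemma independent_UN_direct_sum:
  fixes B :: "nat \<Rightarrow> 'a::real_vector set"
  assumes ds: "direct_sum_UNIV k (\<lambda>i. span (B i))"
    and fin: "\<forall>i<k. finite (B i)" and ind: "\<forall>i<k. independent (B i)"
    and disj: "\<forall>i<k. \<forall>j<k. i \<noteq> j \<longrightarrow> B i \<inter> B j = {}"
  shows "independent (\<Union>i<k. B i)"
proof
  have finU: "finite (\<Union>i<k. B i)" using fin by blast
  assume "dependent (\<Union>i<k. B i)"
  then obtain m where m: "\<exists>v\<in>(\<Union>i<k. B i). m v \<noteq> 0" "(\<Sum>v\<in>(\<Union>i<k. B i). m v *\<^sub>R v) = 0"
    unfolding dependent_finite[OF finU] by blast
  have "(\<Sum>v\<in>(\<Union>i<k. B i). m v *\<^sub>R v) = (\<Sum>i<k. \<Sum>v\<in>B i. m v *\<^sub>R v)"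
    by (rule sum.UNION_disjoint) (use fin disj in auto)
  with m(2) have sum0: "(\<Sum>i<k. \<Sum>v\<in>B i. m v *\<^sub>R v) = 0" by simp
  have span_in: "\<forall>i<k. (\<Sum>v\<in>B i. m v *\<^sub>R v) \<in> span (B i)"
    by (simp add: span_base span_scale span_sum)
  have zero: "\<forall>i<k. 0 \<in> span (B i)" by (simp add: span_zero)
  note block_zero = direct_sum_UNIV_zero[OF ds zero span_in sum0]
  from m(1) obtain i v where i: "i < k" "v \<in> B i" "m v \<noteq> 0" by blast
  have "dependent (B i)"
    unfolding dependent_finite[OF fin[rule_format, OF i(1)]] using i block_zero by blast
  with ind i(1) show False by blast
qed

lemma span_UN_direct_sum:
  assumes "direct_sum_UNIV k (\<lambda>i. span (B i))"
  shows "span (\<Union>i<k. B i) = UNIV"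
proof -
  have "v \<in> span (\<Union>i<k. B i)" for v
  proof -
    from assms obtain f where f: "\<forall>i<k. f i \<in> span (B i)" "v = (\<Sum>i<k. f i)"
      unfolding direct_sum_UNIV_def by blast
    have "\<forall>i<k. f i \<in> span (\<Union>i<k. B i)"
      using f(1) span_mono[of _ "\<Union>i<k. B i"] by blast
    then show ?thesis unfolding f(2) by (intro span_sum) blast
  qed
  then show ?thesis by blast
qed

lemma pos_pair_of_sign_obstruction:
  fixes f :: "nat \<Rightarrow> 'a::real_vector"
  assumes fin: "\<forall>i<k. finite (Xs i)"
    and disj: "\<forall>i<k. \<forall>j<k. i \<noteq> j \<longrightarrow> Xs i \<inter> Xs j = {}"
    and Pnn: "\<forall>i<k. \<forall>y\<in>Xs i. 0 \<le> P i y" and Pf: "\<forall>i<k. f i = (\<Sum>y\<in>Xs i. P i y *\<^sub>R y)"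
    and Nnp: "\<forall>i<k. \<forall>y\<in>Xs i. N i y \<le> 0" and Nf: "\<forall>i<k. f i = (\<Sum>y\<in>Xs i. N i y *\<^sub>R y)"
    and obstruction: "\<And>b1 b2 b3 y1 y2 y3. \<lbrakk>b1 < k; b2 < k; b3 < k; b3 \<noteq> b1; b3 \<noteq> b2;
      y1 \<in> Xs b1; y2 \<in> Xs b2; y3 \<in> Xs b3; y1 \<noteq> y2; 0 < P b1 y1; 0 < P b2 y2; N b3 y3 < 0\<rbrakk>
      \<Longrightarrow> False"
    and ij: "i < k" "j < k" "i \<noteq> j" "f i \<noteq> 0" "f j \<noteq> 0"
  shows "\<exists>yi\<in>Xs i. \<exists>yj\<in>Xs j. (\<Sum>m<k. f m) \<in> pos {yi, yj}"
proof -
  have pos_coeff: "\<exists>y\<in>Xs m. 0 < P m y" if "m < k" "f m \<noteq> 0" for m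
    using that Pnn Pf by (intro nonneg_comb_nonzero_imp_pos_coeff) auto
  have neg_coeff: "\<exists>y\<in>Xs m. N m y < 0" if "m < k" "f m \<noteq> 0" for m
    using that Nnp Nf by (intro nonpos_comb_nonzero_imp_neg_coeff) auto
  have single: "\<exists>y0\<in>Xs a. f a = P a y0 *\<^sub>R y0 \<and> 0 < P a y0"
    if a: "a < k" "f a \<noteq> 0" and b: "b < k" "b \<noteq> a" "f b \<noteq> 0" for a b
  proof -
    obtain y0 where y0: "y0 \<in> Xs a" "0 < P a y0" using pos_coeff a by blast
    obtain y3 where y3: "y3 \<in> Xs b" "N b y3 < 0" using neg_coeff b by blast
    have "P a y = 0" if y: "y \<in> Xs a" "y \<noteq> y0" for y
    proof (rule ccontr)
      assume "P a y \<noteq> 0"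
      then have "0 < P a y" using Pnn a(1) y(1) by (force simp: less_eq_real_def)
      then show False
        using obstruction[OF a(1) a(1) b(1) b(2) b(2) y(1) y0(1) y3(1) y(2) _ y0(2) y3(2)] by blast
    qed
    then have "(\<Sum>y\<in>Xs a. P a y *\<^sub>R y) = P a y0 *\<^sub>R y0"
      using fin a(1) y0(1) by (intro sum_scaleR_single_support) auto
    with Pf a(1) y0 show ?thesis by auto
  qed
  obtain yi where yi: "yi \<in> Xs i" "f i = P i yi *\<^sub>R yi" "0 < P i yi"
    using single[OF ij(1,4) ij(2) not_sym[OF ij(3)] ij(5)] by blast
  obtain yj where yj: "yj \<in> Xs j" "f j = P j yj *\<^sub>R yj" "0 < P j yj"
    using single[OF ij(2,5) ij(1,3,4)] by blast
  have yij: "yi \<noteq> yj" using disj ij yi(1) yj(1) by blast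
  have others: "f m = 0" if m: "m < k" "m \<noteq> i" "m \<noteq> j" for m
  proof (rule ccontr)
    assume "f m \<noteq> 0"
    then obtain y3 where "y3 \<in> Xs m" "N m y3 < 0" using neg_coeff m(1) by blast
    then show False by (rule obstruction[OF ij(1,2) m yi(1) yj(1) _ yij yi(3) yj(3)])
  qed
  have "(\<Sum>m<k. f m) = (\<Sum>m\<in>{i, j}. f m)"
    using others ij by (intro sum.mono_neutral_right) auto
  also have "\<dots> = P i yi *\<^sub>R yi + P j yj *\<^sub>R yj" using ij(3) yi(2) yj(2) by simp
  finally have "(\<Sum>m<k. f m) \<in> pos {yi, yj}"
    unfolding pos_def using yi(3) yj(3) yij
    by (intro CollectI exI[of _ "\<lambda>y. if y = yi then P i yi else P j yj"]) auto
  with yi(1) yj(1) show ?thesis by blast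
qed

lemma skeleton_block_finite:
  assumes "skeleton X k Xs" "i < k"
  shows "finite (Xs i)"
  using assms aff_independent_finite unfolding skeleton_def by blast

lemma skeleton_block_null_comb:
  assumes "skeleton X k Xs" "i < k"
  obtains l where "\<forall>y\<in>Xs i. 0 < l y" "sum l (Xs i) = 1" "(\<Sum>y\<in>Xs i. l y *\<^sub>R y) = 0"
  using assms rel_interior_convex_hull_explicit unfolding skeleton_def by force

lemma skeleton_block_remove:
  assumes sk: "skeleton X k Xs" and i: "i < k" and q: "q \<in> Xs i"
  shows "independent (Xs i - {q})" "span (Xs i - {q}) = span (Xs i)"
proof -
  obtain l where l: "\<forall>y\<in>Xs i. 0 < l y" "sum l (Xs i) = 1" "(\<Sum>y\<in>Xs i. l y *\<^sub>R y) = 0"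
    using skeleton_block_null_comb[OF sk i] .
  have "\<not> affine_dependent (Xs i)" using sk i unfolding skeleton_def by blast
  then show "independent (Xs i - {q})"
    using independent_remove_of_positive_null_comb skeleton_block_finite[OF sk i] q l by blast
  show "span (Xs i - {q}) = span (Xs i)"
    using span_remove_of_positive_null_comb skeleton_block_finite[OF sk i] q l(1,3) by blast
qed

lemma skeleton_transversal_basis:
  fixes Xs :: "nat \<Rightarrow> 'a::euclidean_space set"
  assumes sk: "skeleton X k Xs" and q: "\<forall>i<k. q i \<in> Xs i"
  shows "independent (\<Union>i<k. Xs i - {q i})" "card (\<Union>i<k. Xs i - {q i}) = DIM('a)"
proof -
  let ?B = "\<lambda>i. Xs i - {q i}"
  have span_B: "\<forall>i<k. span (?B i) = span (Xs i)"
    using skeleton_block_remove(2)[OF sk] q by blast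
  have ds: "direct_sum_UNIV k (\<lambda>i. span (?B i))"
    using sk span_B unfolding skeleton_def direct_sum_UNIV_def by (simp cong: all_cong)
  have "\<forall>i<k. finite (?B i)" using skeleton_block_finite[OF sk] by blast
  moreover have "\<forall>i<k. independent (?B i)" using skeleton_block_remove(1)[OF sk] q by blast
  moreover have "\<forall>i<k. \<forall>j<k. i \<noteq> j \<longrightarrow> ?B i \<inter> ?B j = {}"
    using sk unfolding skeleton_def by blast
  ultimately show ind: "independent (\<Union>i<k. ?B i)"
    by (rule independent_UN_direct_sum[OF ds])
  have "dim (\<Union>i<k. ?B i) = DIM('a)"
    using span_UN_direct_sum[OF ds] dim_span[of "\<Union>i<k. ?B i"] dim_UNIV by metis
  then show "card (\<Union>i<k. ?B i) = DIM('a)"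
    using dim_eq_card_independent[OF ind] by simp
qed

lemma skeleton_nonneg_representation:
  assumes sk: "skeleton X k Xs" and i: "i < k" and v: "v \<in> span (Xs i)"
  shows "\<exists>a. (\<exists>p\<in>Xs i. a p = 0) \<and> (\<forall>y\<in>Xs i. 0 \<le> a y) \<and> v = (\<Sum>y\<in>Xs i. a y *\<^sub>R y)"
proof -
  obtain l where l: "\<forall>y\<in>Xs i. 0 < l y" "sum l (Xs i) = 1" "(\<Sum>y\<in>Xs i. l y *\<^sub>R y) = 0"
    using skeleton_block_null_comb[OF sk i] .
  have "Xs i \<noteq> {}" using sk i unfolding skeleton_def by blast
  from span_eq_nonneg_comb_vanishing_at_point[OF skeleton_block_finite[OF sk i] this l(1,3) v]
  show ?thesis .
qed

lemma skeleton_nonneg_representations: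
  assumes sk: "skeleton X k Xs" and f: "\<forall>i<k. f i \<in> span (Xs i)"
  obtains P where "\<forall>i<k. \<exists>p\<in>Xs i. P i p = 0" "\<forall>i<k. \<forall>y\<in>Xs i. 0 \<le> P i y"
    "\<forall>i<k. f i = (\<Sum>y\<in>Xs i. P i y *\<^sub>R y)"
proof -
  have "\<exists>a. i < k \<longrightarrow>
      (\<exists>p\<in>Xs i. a p = 0) \<and> (\<forall>y\<in>Xs i. 0 \<le> a y) \<and> f i = (\<Sum>y\<in>Xs i. a y *\<^sub>R y)" for i
  proof (cases "i < k")
    case True
    then show ?thesis using skeleton_nonneg_representation[OF sk True] f by simp
  qed simp
  then have "\<exists>P. \<forall>i. i < k \<longrightarrow>
      (\<exists>p\<in>Xs i. P i p = 0) \<and> (\<forall>y\<in>Xs i. 0 \<le> P i y) \<and> f i = (\<Sum>y\<in>Xs i. P i y *\<^sub>R y)"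
    by (rule choice[OF allI])
  with that show ?thesis by blast
qed

lemma skeleton_signed_representations:
  assumes sk: "skeleton X k Xs" and f: "\<forall>i<k. f i \<in> span (Xs i)"
  obtains P N where
    "\<forall>i<k. \<exists>p\<in>Xs i. P i p = 0" "\<forall>i<k. \<forall>y\<in>Xs i. 0 \<le> P i y"
    "\<forall>i<k. f i = (\<Sum>y\<in>Xs i. P i y *\<^sub>R y)"
    "\<forall>i<k. \<exists>p\<in>Xs i. N i p = 0" "\<forall>i<k. \<forall>y\<in>Xs i. N i y \<le> 0"
    "\<forall>i<k. f i = (\<Sum>y\<in>Xs i. N i y *\<^sub>R y)"
proof -
  obtain P where P: "\<forall>i<k. \<exists>p\<in>Xs i. P i p = 0" "\<forall>i<k. \<forall>y\<in>Xs i. 0 \<le> P i y"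
    "\<forall>i<k. f i = (\<Sum>y\<in>Xs i. P i y *\<^sub>R y)"
    using skeleton_nonneg_representations[OF sk f] .
  have "\<forall>i<k. - f i \<in> span (Xs i)" using f by (simp add: span_neg)
  then obtain M where M: "\<forall>i<k. \<exists>p\<in>Xs i. M i p = 0" "\<forall>i<k. \<forall>y\<in>Xs i. 0 \<le> M i y"
    "\<forall>i<k. - f i = (\<Sum>y\<in>Xs i. M i y *\<^sub>R y)"
    by (rule skeleton_nonneg_representations[OF sk])
  have "\<forall>i<k. \<exists>p\<in>Xs i. - M i p = 0" "\<forall>i<k. \<forall>y\<in>Xs i. - M i y \<le> 0"
    using M(1,2) by auto
  moreover have "\<forall>i<k. f i = (\<Sum>y\<in>Xs i. (- M i y) *\<^sub>R y)"
  proof (intro allI impI)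
    fix i assume "i < k"
    then have "- f i = (\<Sum>y\<in>Xs i. M i y *\<^sub>R y)" using M(3) by blast
    then have "f i = - (\<Sum>y\<in>Xs i. M i y *\<^sub>R y)" by (metis minus_minus)
    then show "f i = (\<Sum>y\<in>Xs i. (- M i y) *\<^sub>R y)" by (simp add: sum_negf)
  qed
  ultimately show ?thesis by (rule that[OF P])
qed

lemma disjoint_blocks_glue:
  assumes "\<forall>i<k. \<forall>j<k. i \<noteq> j \<longrightarrow> B i \<inter> B j = {}"
  obtains u where "\<forall>i<k. \<forall>y\<in>B i. u y = w i y"
proof
  have "(THE i. i < k \<and> y \<in> B i) = i" if "i < k" "y \<in> B i" for i y
    using that assms by (intro the_equality) auto
  then show "\<forall>i<k. \<forall>y\<in>B i. w (THE i. i < k \<and> y \<in> B i) y = w i y" by simp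
qed

lemma sum_UN_remove_zero_coeffs:
  fixes B :: "nat \<Rightarrow> 'a::real_vector set"
  assumes fin: "\<forall>i<k. finite (B i)" and disj: "\<forall>i<k. \<forall>j<k. i \<noteq> j \<longrightarrow> B i \<inter> B j = {}"
    and q: "\<forall>i<k. q i \<in> B i \<and> w i (q i) = 0" and u: "\<forall>i<k. \<forall>y\<in>B i. u y = w i y"
  shows "(\<Sum>c\<in>(\<Union>i<k. B i - {q i}). u c *\<^sub>R c) = (\<Sum>i<k. \<Sum>y\<in>B i. w i y *\<^sub>R y)"
proof -
  have "\<forall>i\<in>{..<k}. \<forall>j\<in>{..<k}. i \<noteq> j \<longrightarrow> (B i - {q i}) \<inter> (B j - {q j}) = {}"
    using disj by blast
  then have "(\<Sum>c\<in>(\<Union>i<k. B i - {q i}). u c *\<^sub>R c) = (\<Sum>i<k. \<Sum>c\<in>B i - {q i}. u c *\<^sub>R c)"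
    by (intro sum.UNION_disjoint) (use fin in auto)
  also have "\<dots> = (\<Sum>i<k. \<Sum>y\<in>B i. w i y *\<^sub>R y)"
  proof (rule sum.cong[OF refl])
    fix i assume "i \<in> {..<k}"
    then have i: "i < k" by simp
    have "(\<Sum>c\<in>B i - {q i}. u c *\<^sub>R c) = (\<Sum>c\<in>B i - {q i}. w i c *\<^sub>R c)"
      using u i by (intro sum.cong) auto
    also have "\<dots> = (\<Sum>y\<in>B i. w i y *\<^sub>R y)"
      using sum.remove[of "B i" "q i" "\<lambda>y. w i y *\<^sub>R y"] fin q i by simp
    finally show "(\<Sum>c\<in>B i - {q i}. u c *\<^sub>R c) = (\<Sum>y\<in>B i. w i y *\<^sub>R y)" .
  qed
  finally show ?thesis .
qed

lemma standing_setting_no_mixed_signs: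
  fixes X :: "'a::euclidean_space set"
  assumes ss: "standing_setting X" and sk: "skeleton X k Xs"
    and xX: "x \<in> X" and xXs: "\<forall>i<k. x \<notin> Xs i"
    and w0: "\<forall>i<k. \<exists>q\<in>Xs i. w i q = 0"
    and x: "x = (\<Sum>i<k. \<Sum>y\<in>Xs i. w i y *\<^sub>R y)"
    and y1: "b1 < k" "y1 \<in> Xs b1" "w b1 y1 > 0"
    and y2: "b2 < k" "y2 \<in> Xs b2" "w b2 y2 > 0" "y1 \<noteq> y2"
    and y3: "b3 < k" "y3 \<in> Xs b3" "w b3 y3 < 0"
  shows False
proof -
  from w0 have "\<forall>i. \<exists>q. i < k \<longrightarrow> q \<in> Xs i \<and> w i q = 0" by blast
  from choice[OF this] obtain q where q: "\<forall>i<k. q i \<in> Xs i \<and> w i (q i) = 0" by blast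
  have disj: "\<forall>i<k. \<forall>j<k. i \<noteq> j \<longrightarrow> Xs i \<inter> Xs j = {}"
    using sk unfolding skeleton_def by blast
  obtain u where u: "\<forall>i<k. \<forall>y\<in>Xs i. u y = w i y" using disjoint_blocks_glue[OF disj] .
  define C where "C = (\<Union>i<k. Xs i - {q i})"
  have fin: "\<forall>i<k. finite (Xs i)" using skeleton_block_finite[OF sk] by blast
  have "\<forall>i<k. q i \<in> Xs i" using q by blast
  note basis = skeleton_transversal_basis[OF sk this]
  have ind: "independent C" and card: "card C = DIM('a)"
    unfolding C_def by (fact basis(1), fact basis(2))
  have x_coords: "x = (\<Sum>c\<in>C. u c *\<^sub>R c)"
    unfolding x C_def by (rule sum_UN_remove_zero_coeffs[OF fin disj q u, symmetric])
  have coord: "y \<in> C" "u y = w b y" if "b < k" "y \<in> Xs b" "w b y \<noteq> 0" for b y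
  proof -
    have "y \<noteq> q b" using that q by auto
    then show "y \<in> C" unfolding C_def using that by blast
    show "u y = w b y" using u that by blast
  qed
  have c1: "y1 \<in> C" "u y1 > 0" using coord[OF y1(1,2)] y1(3) by simp_all
  have c2: "y2 \<in> C" "u y2 > 0" using coord[OF y2(1,2)] y2(3) by simp_all
  have c3: "y3 \<in> C" "u y3 < 0" using coord[OF y3(1,2)] y3(3) by simp_all
  have finC: "finite C" unfolding C_def using fin by auto
  have xC: "x \<notin> C" unfolding C_def using xXs by blast
  have "conical_position (insert x C)"
    by (rule conical_position_insert_mixed_signs[OF finC ind xC x_coords c1 c2 y2(4) c3])
  moreover have "good_position (insert x C)"
  proof -
    have "\<forall>i<k. Xs i \<subseteq> X" using sk unfolding skeleton_def by blast
    then have "insert x C \<subseteq> X" using xX unfolding C_def by blast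
    moreover have "card (insert x C) = DIM('a) + 1" using card finC xC by simp
    moreover have "\<forall>A. A \<subseteq> X \<and> card A = DIM('a) + 1 \<longrightarrow> good_position A"
      using ss unfolding standing_setting_def by (elim conjE)
    ultimately show ?thesis by blast
  qed
  ultimately show False unfolding good_position_def by simp
qed

lemma standing_setting_sign_obstruction:
  fixes X :: "'a::euclidean_space set"
  assumes ss: "standing_setting X" and sk: "skeleton X k Xs"
    and xX: "x \<in> X" and xXs: "\<forall>i<k. x \<notin> Xs i" and x: "x = (\<Sum>i<k. f i)"
    and P0: "\<forall>i<k. \<exists>p\<in>Xs i. P i p = 0" and Pf: "\<forall>i<k. f i = (\<Sum>y\<in>Xs i. P i y *\<^sub>R y)"
    and N0: "\<forall>i<k. \<exists>p\<in>Xs i. N i p = 0" and Nf: "\<forall>i<k. f i = (\<Sum>y\<in>Xs i. N i y *\<^sub>R y)"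
    and b: "b1 < k" "b2 < k" "b3 < k" "b3 \<noteq> b1" "b3 \<noteq> b2"
    and y: "y1 \<in> Xs b1" "y2 \<in> Xs b2" "y3 \<in> Xs b3" "y1 \<noteq> y2"
    and sgn: "0 < P b1 y1" "0 < P b2 y2" "N b3 y3 < 0"
  shows False
proof -
  define w where "w i = (if i = b1 \<or> i = b2 then P i else N i)" for i
  have w0: "\<forall>i<k. \<exists>q\<in>Xs i. w i q = 0" using P0 N0 by (simp add: w_def)
  have xw: "x = (\<Sum>i<k. \<Sum>y\<in>Xs i. w i y *\<^sub>R y)"
    unfolding x using Pf Nf by (intro sum.cong) (auto simp: w_def)
  have "0 < w b1 y1" "0 < w b2 y2" "w b3 y3 < 0" using sgn b(4,5) by (simp_all add: w_def)
  from standing_setting_no_mixed_signs[OF ss sk xX xXs w0 xw b(1) y(1) this(1) b(2) y(2)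
      this(2) y(4) b(3) y(3) this(3)]
  show False .
qed

theorem proposition5p1:
  fixes X :: "'a::euclidean_space set" and Xs :: "nat \<Rightarrow> 'a set" and k :: nat and x :: 'a
  assumes "standing_setting X"
    and "skeleton X k Xs"
    and "x \<in> X"
    and "\<forall>i<k. x \<notin> span (Xs i)"
  shows "\<exists>i<k. \<exists>j<k. i \<noteq> j \<and> (\<exists>xi\<in>Xs i. \<exists>xj\<in>Xs j. x \<in> pos {xi, xj})"
proof -
  note ss = assms(1) and sk = assms(2) and xX = assms(3) and xsp = assms(4)
  have ds: "direct_sum_UNIV k (\<lambda>i. span (Xs i))"
    and disj: "\<forall>i<k. \<forall>j<k. i \<noteq> j \<longrightarrow> Xs i \<inter> Xs j = {}"
    using sk unfolding skeleton_def by blast+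
  obtain f where f: "\<forall>i<k. f i \<in> span (Xs i)" and x: "x = (\<Sum>i<k. f i)"
    using ds unfolding direct_sum_UNIV_def by blast
  obtain P N where P: "\<forall>i<k. \<exists>p\<in>Xs i. P i p = 0" "\<forall>i<k. \<forall>y\<in>Xs i. 0 \<le> P i y"
      "\<forall>i<k. f i = (\<Sum>y\<in>Xs i. P i y *\<^sub>R y)"
    and N: "\<forall>i<k. \<exists>p\<in>Xs i. N i p = 0" "\<forall>i<k. \<forall>y\<in>Xs i. N i y \<le> 0"
      "\<forall>i<k. f i = (\<Sum>y\<in>Xs i. N i y *\<^sub>R y)"
    using skeleton_signed_representations[OF sk f] .
  have "\<forall>i<k. x \<notin> Xs i" using xsp span_base by blast
  note obstruction = standing_setting_sign_obstruction[OF ss sk xX this x P(1,3) N(1,3)]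
  have "0 \<notin> X" using ss unfolding standing_setting_def by blast
  then have "(\<Sum>i<k. f i) \<noteq> 0" using xX x by auto
  moreover have "\<forall>i<k. (\<Sum>i<k. f i) \<noteq> f i" using xsp f x by auto
  ultimately obtain i j where ij: "i < k" "j < k" "i \<noteq> j" "f i \<noteq> 0" "f j \<noteq> 0"
    using two_nonzero_summands by blast
  have fin: "\<forall>i<k. finite (Xs i)" using skeleton_block_finite[OF sk] by blast
  have "\<exists>yi\<in>Xs i. \<exists>yj\<in>Xs j. (\<Sum>m<k. f m) \<in> pos {yi, yj}"
    by (rule pos_pair_of_sign_obstruction[OF fin disj P(2,3) N(2,3) _ ij]) (fact obstruction)
  with ij show ?thesis unfolding x[symmetric] by blast
qed

end
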